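(* Consider a birth-death process with mass-action kinetics and dynamics $\dot s=f(s)=B(s)-D(s)$, where $B(s)=\sum_{n\ge0}\kappa_ns^n$ and $D(s)=\sum_{n\ge1}\kappa_{-n}s^n$, and suppose $\kappa_0>0$ and either $n_d>n_u$, or $n_d=n_u$ and $\kappa_{-n_d}>\kappa_{n_u}$. Suppose $\bar s$ is the unique positive equilibrium of $f$ and $f'(\bar s)\neq0$. Let $$V(s)=\int_{\bar s}^{s}\ln\!\left(\frac{D(v)}{B(v)}\right)\mathrm{d}v .$$ Then $V(s)\ge0$ for all $s\ge0$, with equality if and only if $s=\bar s$, and $V$ is a Lyapunov function ensuring that $\bar s$ is globally asymptotically stable (it is stable and every solution with $s(0)\ge0$ converges to $\bar s$).
   Context: A birth-death process is a CRN with a single species $S$ in which every reaction has the form $nS\to(n+1)S$ or $nS\to(n-1)S$ ($0S$ denotes the empty complex). Under mass-action kinetics, $\kappa_n\ge0$ is the rate constant of $nS\to(n+1)S$ and $\kappa_{-n}\ge0$ that of $nS\to(n-1)S$ (zero if absent). $n_u$ is the largest $n$ with $\kappa_n>0$ and $n_d$ the largest $n$ with $\kappa_{-n}>0$. *)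

theory Defs
  imports "HOL-Analysis.Analysis"
begin

text \<open>Birth-death mass-action network. Rate constants are given by two functions:
  kb n = kappa_n (rate of nS -> (n+1)S, n >= 0) and
  kd n = kappa_{-n} (rate of nS -> (n-1)S, only n >= 1 is meaningful).\<close>

definition birth :: "(nat \<Rightarrow> real) \<Rightarrow> real \<Rightarrow> real" where
  "birth kb s = (\<Sum>n\<in>{n. kb n \<noteq> 0}. kb n * s ^ n)"

definition death :: "(nat \<Rightarrow> real) \<Rightarrow> real \<Rightarrow> real" where
  "death kd s = (\<Sum>n\<in>{n. 1 \<le> n \<and> kd n \<noteq> 0}. kd n * s ^ n)"

definition n_u :: "(nat \<Rightarrow> real) \<Rightarrow> nat" where
  "n_u kb = (GREATEST n. kb n > 0)"

definition n_d :: "(nat \<Rightarrow> real) \<Rightarrow> nat" where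
  "n_d kd = (GREATEST n. 1 \<le> n \<and> kd n > 0)"

definition is_solution :: "(real \<Rightarrow> real) \<Rightarrow> (real \<Rightarrow> real) \<Rightarrow> bool" where
  "is_solution f x \<longleftrightarrow> (\<forall>t\<ge>0. (x has_real_derivative f (x t)) (at t within {0..}))"

end

(* Since all rate constants are nonnegative, f = B - D is positive at 0 (because kappa_0 > 0)
   and, by the degree condition, negative for large s; uniqueness of the positive equilibrium
   sbar then forces f > 0 on [0, sbar) and f < 0 on (sbar, infinity). Hence the integrand
   ln (D/B) of V is negative below sbar and positive above it, so V decreases on [0, sbar],
   increases on [sbar, infinity) and vanishes only at sbar; its singularity at 0 is logarithmic,
   hence integrable. A solution of s' = f s starting in [0, infinity) moves monotonically towards
   sbar without crossing it. This gives the monotonicity of V along solutions and stability with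
   delta = epsilon, and convergence follows because a solution staying a fixed distance away from
   sbar would move with speed bounded away from 0. *)

theory Submission
  imports Defs "HOL-Real_Asymp.Real_Asymp"
begin

section \<open>Scalar autonomous ODEs with one attracting point\<close>

lemma last_time_at_most:
  fixes y :: "real \<Rightarrow> real"
  assumes "t0 \<le> t1" "continuous_on {t0..t1} y" "y t0 \<le> m" "m < y t1"
  obtains a where "t0 \<le> a" "a < t1" "y a \<le> m" "\<And>t. a < t \<Longrightarrow> t \<le> t1 \<Longrightarrow> m < y t"
proof -
  let ?Z = "{t0..t1} \<inter> y -` {..m}"
  have "closed ?Z" using assms(2) by (intro continuous_closed_preimage) auto
  then have "compact ?Z" by (simp add: compact_eq_bounded_closed bounded_Int)
  moreover have "t0 \<in> ?Z" using assms by auto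
  ultimately obtain a where a: "a \<in> ?Z" "\<And>t. t \<in> ?Z \<Longrightarrow> t \<le> a"
    using compact_attains_sup by (metis empty_iff)
  moreover have "m < y t" if "a < t" "t \<le> t1" for t
    using a(1) a(2)[of t] that by force
  moreover have "a \<noteq> t1" using a assms(4) by auto
  ultimately show thesis using that[of a] by auto
qed

lemma is_solution_continuous_on: "is_solution f x \<Longrightarrow> continuous_on {0..} x"
  unfolding is_solution_def
  by (auto simp: continuous_on_eq_continuous_within intro: DERIV_continuous)

lemma is_solution_has_derivative_at:
  assumes "is_solution f x" "0 < t"
  shows "(x has_real_derivative f (x t)) (at t)"
proof -
  have "(x has_real_derivative f (x t)) (at t within {0..})"
    using assms unfolding is_solution_def by simp
  then have "(x has_real_derivative f (x t)) (at t within {0<..})"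
    by (rule has_field_derivative_subset) auto
  moreover have "at t within {0<..} = at t" using assms(2) by (intro at_within_open) auto
  ultimately show ?thesis by simp
qed

lemma is_solution_reflect:
  "is_solution f x \<Longrightarrow> is_solution (\<lambda>y. - f (- y)) (\<lambda>t. - x t)"
  unfolding is_solution_def by (auto intro: DERIV_minus)

lemma solution_growth_lower_bound:
  assumes sol: "is_solution f x" and "0 \<le> a" "a \<le> b"
    and bound: "\<And>t. a < t \<Longrightarrow> t < b \<Longrightarrow> c \<le> f (x t)"
  shows "c * (b - a) \<le> x b - x a"
proof (cases "a = b")
  case False
  have "continuous_on {a..b} x"
    by (rule continuous_on_subset[OF is_solution_continuous_on[OF sol]]) (use assms(2) in auto)
  moreover have "x differentiable (at t)" if "a < t" "t < b" for t
    using is_solution_has_derivative_at[OF sol, of t] that assms(2)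
    unfolding real_differentiable_def by auto
  ultimately obtain l t where t: "a < t" "t < b" "DERIV x t :> l" "x b - x a = (b - a) * l"
    using MVT[of a b x] False assms(3) by (metis order_le_imp_less_or_eq)
  have "l = f (x t)"
    using DERIV_unique[OF t(3) is_solution_has_derivative_at[OF sol]] t assms(2) by simp
  then show ?thesis using t bound[OF t(1,2)] assms(3) by (simp add: mult.commute mult_left_mono)
qed simp

lemma solution_stays_above:
  assumes sol: "is_solution f x" and "0 \<le> t0" "t0 \<le> t" "m \<le> x t0" "a < m"
    and nonneg: "\<And>y. a < y \<Longrightarrow> y < m \<Longrightarrow> 0 \<le> f y"
  shows "m \<le> x t"
proof (rule ccontr)
  assume "\<not> m \<le> x t"
  moreover have "continuous_on {t0..t} (\<lambda>s. - x s)"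
    using is_solution_continuous_on[OF sol] assms(2)
    by (intro continuous_intros) (auto intro: continuous_on_subset)
  ultimately obtain r where r: "t0 \<le> r" "r < t" "m \<le> x r" "\<And>s. r < s \<Longrightarrow> s \<le> t \<Longrightarrow> x s < m"
    using last_time_at_most[of t0 t "\<lambda>s. - x s" "- m"] assms(3,4) by auto
  have "continuous (at r within {0..}) x"
    using is_solution_continuous_on[OF sol] r(1) assms(2) by (simp add: continuous_on_eq_continuous_within)
  then obtain d where d: "0 < d" "\<And>s. s \<in> {0..} \<Longrightarrow> dist s r < d \<Longrightarrow> dist (x s) (x r) < m - a"
    unfolding continuous_within_eps_delta using \<open>a < m\<close> by (meson diff_gt_0_iff_gt)
  define b where "b = min (r + d / 2) t"
  have b: "r < b" "b \<le> t" using r d unfolding b_def by auto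
  have "0 * (b - r) \<le> x b - x r"
  proof (rule solution_growth_lower_bound[OF sol])
    fix s assume s: "r < s" "s < b"
    have "s < r + d" using s d(1) unfolding b_def by auto
    then have "dist (x s) (x r) < m - a" using d(2)[of s] s r(1) assms(2) by (simp add: dist_real_def)
    moreover have "x s < m" using r(4)[of s] s b by simp
    ultimately show "0 \<le> f (x s)" using nonneg[of "x s"] r(3) by (simp add: dist_real_def)
  qed (use r assms(2) b in auto)
  then show False using r(3) r(4)[of b] b by auto
qed

lemma solution_stays_below:
  assumes sol: "is_solution f x" and "0 \<le> t0" "t0 \<le> t" "x t0 \<le> m" "m < b"
    and nonpos: "\<And>y. m < y \<Longrightarrow> y < b \<Longrightarrow> f y \<le> 0"
  shows "x t \<le> m"
proof -
  have "- m \<le> - x t"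
  proof (rule solution_stays_above[OF is_solution_reflect[OF sol], of t0 t "- m" "- b"])
    fix y :: real assume "- b < y" "y < - m"
    then show "0 \<le> - f (- y)" using nonpos[of "- y"] by simp
  qed (use assms in auto)
  then show ?thesis by simp
qed

lemma solution_mono_on_below:
  assumes sol: "is_solution f x" and "a < x 0" "x 0 \<le> c" "c < b"
    and nonneg: "\<And>y. a < y \<Longrightarrow> y < c \<Longrightarrow> 0 \<le> f y"
    and nonpos: "\<And>y. c < y \<Longrightarrow> y < b \<Longrightarrow> f y \<le> 0"
  shows "mono_on {0..} x" and "\<And>t. 0 \<le> t \<Longrightarrow> x t \<le> c"
proof -
  show below: "x t \<le> c" if "0 \<le> t" for t
    using solution_stays_below[OF sol _ that assms(3,4) nonpos] by simp
  have rise: "x s \<le> x t" if "0 \<le> s" "s \<le> t" "a < x s" for s t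
    using solution_stays_above[OF sol that(1,2) order_refl that(3)] below[OF that(1)] nonneg
    by fastforce
  have start: "x 0 \<le> x t" if "0 \<le> t" for t
    using rise[of 0 t] that assms(2) by simp
  show "mono_on {0..} x"
  proof (rule mono_onI)
    fix r s :: real assume "r \<in> {0..}" "s \<in> {0..}" "r \<le> s"
    then show "x r \<le> x s" using rise[of r s] start[of r] assms(2) by simp
  qed
qed

lemma solution_tendsto_from_below:
  assumes sol: "is_solution f x" and "a < x 0" "x 0 \<le> c" "c < b"
    and cont: "continuous_on {a<..<c} f"
    and pos: "\<And>y. a < y \<Longrightarrow> y < c \<Longrightarrow> 0 < f y"
    and nonpos: "\<And>y. c < y \<Longrightarrow> y < b \<Longrightarrow> f y \<le> 0"
  shows "(x \<longlongrightarrow> c) at_top"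
proof (rule tendstoI)
  fix e :: real assume "0 < e"
  have "0 \<le> f y" if "a < y" "y < c" for y
    using pos[OF that] by simp
  note monotone = solution_mono_on_below[OF sol assms(2-4) this nonpos]
  note mono = monotone(1) and below = monotone(2)
  txt \<open>Below \<open>c - e\<close> the solution would grow at least linearly, with slope \<open>min f > 0\<close>
    on \<open>[x 0, c - e]\<close>.\<close>
  have "\<exists>T\<ge>0. c - e < x T"
  proof (rule ccontr)
    assume "\<not> ?thesis"
    then have low: "x T \<le> c - e" if "0 \<le> T" for T using that by force
    have "continuous_on {x 0..c - e} f"
      by (rule continuous_on_subset[OF cont]) (use assms(2) \<open>0 < e\<close> in auto)
    then obtain z where z: "z \<in> {x 0..c - e}" "\<And>y. y \<in> {x 0..c - e} \<Longrightarrow> f z \<le> f y"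
      using continuous_attains_inf[of "{x 0..c - e}" f] low[of 0] by auto
    define \<mu> where "\<mu> = f z"
    have "0 < \<mu>" unfolding \<mu>_def using pos z(1) assms(2) \<open>0 < e\<close> by simp
    have "\<mu> * (T - 0) \<le> x T - x 0" if "0 \<le> T" for T
    proof (rule solution_growth_lower_bound[OF sol order_refl that])
      fix t assume "0 < t" "t < T"
      then show "\<mu> \<le> f (x t)"
        unfolding \<mu>_def using z(2) low[of t] mono_onD[OF mono, of 0 t] by auto
    qed
    from this[of "(c - x 0) / \<mu>"] have "c \<le> x ((c - x 0) / \<mu>)"
      using \<open>0 < \<mu>\<close> assms(3) by simp
    then show False
      using low[of "(c - x 0) / \<mu>"] \<open>0 < \<mu>\<close> \<open>0 < e\<close> assms(3) by simp
  qed
  then obtain T where T: "0 \<le> T" "c - e < x T" by blast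
  have "dist (x t) c < e" if "T \<le> t" for t
    using T mono_onD[OF mono, of T t] below[of t] that by (simp add: dist_real_def)
  then show "\<forall>\<^sub>F t in at_top. dist (x t) c < e"
    unfolding eventually_at_top_linorder by blast
qed

lemma solution_antimono_on_above:
  assumes sol: "is_solution f x" and "a < c" "c \<le> x 0" "x 0 < b"
    and nonneg: "\<And>y. a < y \<Longrightarrow> y < c \<Longrightarrow> 0 \<le> f y"
    and nonpos: "\<And>y. c < y \<Longrightarrow> y < b \<Longrightarrow> f y \<le> 0"
  shows "antimono_on {0..} x" and "\<And>t. 0 \<le> t \<Longrightarrow> c \<le> x t"
proof -
  have "- b < - x 0" "- x 0 \<le> - c" "- c < - a" using assms(2-4) by simp_all
  moreover have "0 \<le> - f (- y)" if "- b < y" "y < - c" for y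
    using nonpos[of "- y"] that by simp
  moreover have "- f (- y) \<le> 0" if "- c < y" "y < - a" for y
    using nonneg[of "- y"] that by simp
  ultimately have "mono_on {0..} (\<lambda>t. - x t)" "\<And>t. 0 \<le> t \<Longrightarrow> - x t \<le> - c"
    using solution_mono_on_below[OF is_solution_reflect[OF sol]] by blast+
  then show "antimono_on {0..} x" "\<And>t. 0 \<le> t \<Longrightarrow> c \<le> x t"
    by (auto simp: monotone_on_def)
qed

lemma solution_tendsto_from_above:
  assumes sol: "is_solution f x" and "a < c" "c \<le> x 0" "x 0 < b"
    and cont: "continuous_on {c<..<b} f"
    and nonneg: "\<And>y. a < y \<Longrightarrow> y < c \<Longrightarrow> 0 \<le> f y"
    and neg: "\<And>y. c < y \<Longrightarrow> y < b \<Longrightarrow> f y < 0"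
  shows "(x \<longlongrightarrow> c) at_top"
proof -
  have "- b < - x 0" "- x 0 \<le> - c" "- c < - a" using assms(2-4) by simp_all
  moreover have "continuous_on {- b<..<- c} (\<lambda>y. - f (- y))"
    using cont by (intro continuous_intros continuous_on_compose2[OF cont]) auto
  moreover have "0 < - f (- y)" if "- b < y" "y < - c" for y
    using neg[of "- y"] that by simp
  moreover have "- f (- y) \<le> 0" if "- c < y" "y < - a" for y
    using nonneg[of "- y"] that by simp
  ultimately have "((\<lambda>t. - x t) \<longlongrightarrow> - c) at_top"
    using solution_tendsto_from_below[OF is_solution_reflect[OF sol]] by blast
  then show ?thesis by (simp add: tendsto_minus_cancel_left)
qed

section \<open>Integrating an integrand with a single sign change\<close>

lemma set_integrable_ln: "set_integrable lborel {0..b} (ln :: real \<Rightarrow> real)"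
proof -
  define H where "H = (\<lambda>v::real. v - v * ln v)"
  have "continuous_on {0..1} H"
  proof -
    have "((\<lambda>v::real. v - v * ln v) \<longlongrightarrow> 0) (at_right 0)" by real_asymp
    then have "continuous (at v within {0..1}) H" if "v \<in> {0..1}" for v
    proof (cases "v = 0")
      case True
      then show ?thesis
        using \<open>(_ \<longlongrightarrow> 0) _\<close> by (simp add: H_def continuous_within at_within_Icc_at_right)
    next
      case False
      then have "isCont (\<lambda>v. v - v * ln v) v" using that by (intro continuous_intros) auto
      then show ?thesis unfolding H_def by (rule continuous_at_imp_continuous_at_within)
    qed
    then show ?thesis by (simp add: continuous_on_eq_continuous_within)
  qed
  moreover have "(H has_vector_derivative - ln v) (at v)" if "v \<in> {0<..<1}" for v
    using that unfolding H_def has_real_derivative_iff_has_vector_derivative[symmetric]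
    by (auto intro!: derivative_eq_intros)
  ultimately have "((\<lambda>v. - ln v) has_integral H 1 - H 0) {0..1}"
    by (intro fundamental_theorem_of_calculus_interior) auto
  then have "(\<lambda>v::real. - ln v) integrable_on {0..1}" by (rule has_integral_integrable)
  moreover have "0 \<le> - ln v" if "v \<in> {0..1}" for v :: real
    using that by (cases "v = 0") auto
  ultimately have "(\<lambda>v::real. - ln v) absolutely_integrable_on {0..1}"
    by (rule nonnegative_absolutely_integrable_1)
  moreover have "(\<lambda>v::real. indicator {0..1} v *\<^sub>R - ln v) \<in> borel_measurable lborel"
    by measurable
  ultimately have "set_integrable lborel {0..1} (\<lambda>v::real. - ln v)"
    unfolding set_integrable_def using integrable_completion by blast
  then have "set_integrable lborel {0..1} (ln :: real \<Rightarrow> real)"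
    using set_integrable_mult_right[of "-1" lborel "{0..1}" "\<lambda>v::real. - ln v"] by simp
  moreover have "set_integrable lborel {1..max 1 b} (ln :: real \<Rightarrow> real)"
    by (intro borel_integrable_atLeastAtMost' continuous_intros) auto
  ultimately have "set_integrable lborel ({0..1} \<union> {1..max 1 b}) (ln :: real \<Rightarrow> real)"
    by (rule set_integrable_Un) auto
  then show ?thesis by (rule set_integrable_subset) auto
qed

lemma interval_integral_nonneg:
  fixes f :: "real \<Rightarrow> real"
  assumes "a \<le> b" "\<And>v. a < v \<Longrightarrow> v < b \<Longrightarrow> 0 \<le> f v"
  shows "0 \<le> (LBINT v=ereal a..ereal b. f v)"
  using assms unfolding interval_lebesgue_integral_def set_lebesgue_integral_def
  by (auto intro!: integral_nonneg simp: indicator_def)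

lemma interval_integral_pos:
  fixes f :: "real \<Rightarrow> real"
  assumes "a < b" "continuous_on {a..b} f" "\<And>v. a < v \<Longrightarrow> v < b \<Longrightarrow> 0 < f v"
  shows "0 < (LBINT v=ereal a..ereal b. f v)"
proof -
  have "integral (cbox a b) (\<lambda>_. 0) < integral (cbox a b) f"
    by (rule integral_less) (use assms in auto)
  then show ?thesis
    using assms by (simp add: interval_integral_eq_integral borel_integrable_atLeastAtMost')
qed

locale crossing_integrand =
  fixes g :: "real \<Rightarrow> real" and c :: real
  assumes c_pos: "0 < c"
    and integrable: "\<And>b. set_integrable lborel {0..b} g"
    and continuous: "continuous_on {0<..} g"
    and neg: "\<And>v. 0 < v \<Longrightarrow> v < c \<Longrightarrow> g v < 0"
    and pos: "\<And>v. c < v \<Longrightarrow> 0 < g v"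
begin

definition potential :: "real \<Rightarrow> real" where
  "potential s = (LBINT v=ereal c..ereal s. g v)"

lemma interval_integrable:
  assumes "0 \<le> a" "0 \<le> b"
  shows "interval_lebesgue_integrable lborel (ereal a) (ereal b) g"
  unfolding interval_lebesgue_integrable_def
  using assms by (auto intro!: set_integrable_subset[OF integrable[of "max a b"]])

lemma potential_diff:
  assumes "0 \<le> s1" "0 \<le> s2"
  shows "potential s2 - potential s1 = (LBINT v=ereal s1..ereal s2. g v)"
proof -
  have "min (ereal c) (min (ereal s1) (ereal s2)) = ereal (min c (min s1 s2))"
    by (simp add: min_def)
  moreover have "max (ereal c) (max (ereal s1) (ereal s2)) = ereal (max c (max s1 s2))"
    by (simp add: max_def)
  ultimately have "interval_lebesgue_integrable lborel
      (min (ereal c) (min (ereal s1) (ereal s2))) (max (ereal c) (max (ereal s1) (ereal s2))) g"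
    using assms c_pos by (metis interval_integrable max.coboundedI1 min.boundedI less_imp_le)
  from interval_integral_sum[OF this] show ?thesis unfolding potential_def by linarith
qed

lemma potential_antimono:
  assumes "0 \<le> s1" "s1 \<le> s2" "s2 \<le> c"
  shows "potential s2 \<le> potential s1"
proof -
  have "0 \<le> - g v" if "s1 < v" "v < s2" for v
    using neg[of v] that assms by simp
  then have "0 \<le> (LBINT v=ereal s1..ereal s2. - g v)"
    using assms by (intro interval_integral_nonneg) auto
  then show ?thesis
    using potential_diff[of s1 s2] assms by (simp add: interval_lebesgue_integral_uminus)
qed

lemma potential_mono:
  assumes "c \<le> s1" "s1 \<le> s2"
  shows "potential s1 \<le> potential s2"
proof -
  have "0 \<le> g v" if "s1 < v" for v
    using pos[of v] that assms by simp
  then have "0 \<le> (LBINT v=ereal s1..ereal s2. g v)"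
    using assms by (intro interval_integral_nonneg) auto
  then show ?thesis
    using potential_diff[of s1 s2] assms c_pos by simp
qed

lemma potential_pos:
  assumes "0 \<le> s" "s \<noteq> c"
  shows "0 < potential s"
proof (cases "c < s")
  case True
  have "continuous_on {c..s} g" by (rule continuous_on_subset[OF continuous]) (use c_pos in auto)
  then show ?thesis unfolding potential_def using True pos by (intro interval_integral_pos) auto
next
  case False
  define s' where "s' = (s + c) / 2"
  have s': "0 < s'" "s \<le> s'" "s' < c" using assms False c_pos unfolding s'_def by auto
  have "continuous_on {s'..c} g" by (rule continuous_on_subset[OF continuous]) (use s' in auto)
  then have "continuous_on {s'..c} (\<lambda>v. - g v)" by (rule continuous_on_minus)
  then have "0 < (LBINT v=ereal s'..ereal c. - g v)"
    using s' neg by (intro interval_integral_pos) auto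
  also have "\<dots> = potential s'"
    unfolding potential_def
    by (subst interval_integral_endpoints_reverse) (simp add: interval_lebesgue_integral_uminus)
  also have "\<dots> \<le> potential s" using potential_antimono s' assms by simp
  finally show ?thesis .
qed

lemma potential_nonneg: "0 \<le> s \<Longrightarrow> 0 \<le> potential s"
  using potential_pos[of s] by (cases "s = c") (auto simp: potential_def)

lemma potential_eq_0_iff: "0 \<le> s \<Longrightarrow> potential s = 0 \<longleftrightarrow> s = c"
  using potential_pos[of s] by (cases "s = c") (auto simp: potential_def)

end

section \<open>Birth-death networks\<close>

lemma sum_monomials_le_leading:
  fixes a :: "nat \<Rightarrow> real"
  assumes "finite S" "\<And>n. n \<in> S \<Longrightarrow> n \<le> d" "\<And>n. 0 \<le> a n" "1 \<le> s"
  shows "(\<Sum>n\<in>S. a n * s ^ n) \<le> a d * s ^ d + (\<Sum>n\<in>S. a n) * s ^ (d - 1)"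
proof -
  have "a n * s ^ n \<le> (if n = d then a d * s ^ d else 0) + a n * s ^ (d - 1)" if "n \<in> S" for n
  proof (cases "n = d")
    case False
    then have "s ^ n \<le> s ^ (d - 1)" using assms(2)[OF that] assms(4) by (intro power_increasing) auto
    then show ?thesis using False assms(3)[of n] by (simp add: mult_left_mono)
  qed (use assms(3,4) in simp)
  then have "(\<Sum>n\<in>S. a n * s ^ n)
      \<le> (\<Sum>n\<in>S. if n = d then a d * s ^ d else 0) + (\<Sum>n\<in>S. a n) * s ^ (d - 1)"
    by (simp add: sum_mono sum.distrib[symmetric] sum_distrib_right)
  also have "(\<Sum>n\<in>S. if n = d then a d * s ^ d else 0) \<le> a d * s ^ d"
    using assms(1,3,4) by simp
  finally show ?thesis by simp
qed

locale birth_death =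
  fixes kb kd :: "nat \<Rightarrow> real"
  assumes kb_nonneg: "\<And>n. 0 \<le> kb n" and kd_nonneg: "\<And>n. 0 \<le> kd n"
    and kb_finite: "finite {n. kb n \<noteq> 0}" and kd_finite: "finite {n. kd n \<noteq> 0}"
    and kb0_pos: "0 < kb 0"
    and death_exists: "\<exists>n\<ge>1. 0 < kd n"
    and degree: "n_d kd > n_u kb \<or> (n_d kd = n_u kb \<and> kd (n_d kd) > kb (n_u kb))"
begin

abbreviation net_rate :: "real \<Rightarrow> real" where
  "net_rate \<equiv> \<lambda>s. birth kb s - death kd s"

definition log_ratio :: "real \<Rightarrow> real" where
  "log_ratio v = ln (death kd v / birth kb v)"

lemma isCont_birth: "isCont (birth kb) s"
  unfolding birth_def by (intro continuous_intros)

lemma isCont_death: "isCont (death kd) s"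
  unfolding death_def by (intro continuous_intros)

lemma continuous_on_net_rate: "continuous_on S net_rate"
  using isCont_birth isCont_death by (intro continuous_at_imp_continuous_on continuous_intros) auto

lemma monomial_le_birth:
  assumes "0 \<le> s" shows "kb n * s ^ n \<le> birth kb s"
proof (cases "kb n = 0")
  case True
  then show ?thesis
    using assms kb_nonneg unfolding birth_def by (simp add: sum_nonneg)
next
  case False
  then show ?thesis
    unfolding birth_def using assms kb_finite kb_nonneg
    by (intro member_le_sum[where f = "\<lambda>n. kb n * s ^ n"]) auto
qed

lemma monomial_le_death:
  assumes "0 \<le> s" "1 \<le> n" shows "kd n * s ^ n \<le> death kd s"
proof (cases "kd n = 0")
  case True
  then show ?thesis
    using assms kd_nonneg unfolding death_def by (simp add: sum_nonneg)
next
  case False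
  have "finite {n. 1 \<le> n \<and> kd n \<noteq> 0}" by (rule finite_subset[OF _ kd_finite]) auto
  then show ?thesis
    unfolding death_def using assms False kd_nonneg
    by (intro member_le_sum[where f = "\<lambda>n. kd n * s ^ n"]) auto
qed

lemma birth_pos: "0 \<le> s \<Longrightarrow> 0 < birth kb s"
  using monomial_le_birth[of s 0] kb0_pos by simp

lemma death_pos:
  assumes "0 < s" shows "0 < death kd s"
proof -
  obtain m where "1 \<le> m" "0 < kd m" using death_exists by auto
  then have "0 < kd m * s ^ m" using assms by simp
  also have "\<dots> \<le> death kd s" using monomial_le_death \<open>1 \<le> m\<close> assms by simp
  finally show ?thesis .
qed

lemma death_0: "death kd 0 = 0"
  unfolding death_def by (intro sum.neutral) auto

lemma birth_mono: "0 \<le> v \<Longrightarrow> v \<le> w \<Longrightarrow> birth kb v \<le> birth kb w"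
  unfolding birth_def by (intro sum_mono mult_left_mono power_mono) (auto intro: kb_nonneg)

lemma death_mono: "0 \<le> v \<Longrightarrow> v \<le> w \<Longrightarrow> death kd v \<le> death kd w"
  unfolding death_def by (intro sum_mono mult_left_mono power_mono) (auto intro: kd_nonneg)

lemma n_d_spec: "1 \<le> n_d kd" "0 < kd (n_d kd)"
proof -
  obtain m where m: "1 \<le> m" "0 < kd m" using death_exists by auto
  have bounded: "\<And>n. 1 \<le> n \<and> 0 < kd n \<Longrightarrow> n \<le> Max {n. kd n \<noteq> 0}"
    using kd_finite by (intro Max_ge) auto
  have "1 \<le> n_d kd \<and> 0 < kd (n_d kd)"
    unfolding n_d_def by (rule GreatestI_nat[of _ m]) (use m bounded in auto)
  then show "1 \<le> n_d kd" "0 < kd (n_d kd)" by auto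
qed

lemma kb_nonzero_imp_le_n_u: "kb n \<noteq> 0 \<Longrightarrow> n \<le> n_u kb"
proof -
  assume "kb n \<noteq> 0"
  then have "0 < kb n" using kb_nonneg[of n] by simp
  moreover have bounded: "\<And>n. 0 < kb n \<Longrightarrow> n \<le> Max {n. kb n \<noteq> 0}"
    using kb_finite by (intro Max_ge) auto
  ultimately show "n \<le> n_u kb"
    unfolding n_u_def by (intro Greatest_le_nat[of _ n "Max {n. kb n \<noteq> 0}"]) auto
qed

lemma kb_nonzero_imp_le_n_d: "kb n \<noteq> 0 \<Longrightarrow> n \<le> n_d kd"
  using kb_nonzero_imp_le_n_u[of n] degree by linarith

lemma leading_birth_less_death: "kb (n_d kd) < kd (n_d kd)"
proof (cases "n_u kb < n_d kd")
  case True
  then have "kb (n_d kd) = 0" using kb_nonzero_imp_le_n_u[of "n_d kd"] by linarith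
  then show ?thesis using n_d_spec(2) by simp
qed (use degree in auto)

lemma eventually_birth_less_death: "\<exists>S. \<forall>s\<ge>S. birth kb s < death kd s"
proof -
  define d where "d = n_d kd"
  define K where "K = (\<Sum>n\<in>{n. kb n \<noteq> 0}. kb n)"
  define \<delta> where "\<delta> = kd d - kb d"
  have "0 < \<delta>" using leading_birth_less_death unfolding \<delta>_def d_def by simp
  have "birth kb s < death kd s" if s: "max 1 (K / \<delta> + 1) \<le> s" for s
  proof -
    have "1 \<le> s" "K < \<delta> * s" using s \<open>0 < \<delta>\<close> by (auto simp: field_simps)
    have "birth kb s \<le> kb d * s ^ d + K * s ^ (d - 1)"
      unfolding birth_def K_def d_def
      using \<open>1 \<le> s\<close> kb_finite kb_nonneg kb_nonzero_imp_le_n_d by (intro sum_monomials_le_leading) auto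
    moreover have "K * s ^ (d - 1) < \<delta> * s * s ^ (d - 1)"
      using \<open>K < \<delta> * s\<close> \<open>1 \<le> s\<close> by (intro mult_strict_right_mono) auto
    moreover have "\<delta> * s * s ^ (d - 1) = \<delta> * s ^ d"
      using n_d_spec(1) unfolding d_def by (simp add: power_eq_if)
    moreover have "kb d * s ^ d + \<delta> * s ^ d = kd d * s ^ d"
      unfolding \<delta>_def by (simp add: algebra_simps)
    moreover have "kd d * s ^ d \<le> death kd s"
      using monomial_le_death n_d_spec \<open>1 \<le> s\<close> unfolding d_def by simp
    ultimately show ?thesis by linarith
  qed
  then show ?thesis by blast
qed

lemma continuous_on_log_ratio: "continuous_on {0<..} log_ratio"
proof -
  have "isCont log_ratio v" if "0 < v" for v
    using birth_pos[of v] death_pos[of v] that unfolding log_ratio_def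
    by (intro continuous_intros isCont_birth isCont_death) auto
  then show ?thesis by (intro continuous_at_imp_continuous_on) auto
qed

lemma set_integrable_log_ratio: "set_integrable lborel {0..b} log_ratio"
proof -
  obtain m where m: "1 \<le> m" "0 < kd m" using death_exists by auto
  define K1 where "K1 = \<bar>ln (death kd b) - ln (birth kb 0)\<bar>"
  define K2 where "K2 = \<bar>ln (birth kb b) - ln (kd m)\<bar>"
  define K where "K = K1 + K2"
  have "0 \<le> K1" "0 \<le> K2" unfolding K1_def K2_def by simp_all
  have bound: "\<bar>log_ratio v\<bar> \<le> K + real m * \<bar>ln v\<bar>" if v: "0 \<le> v" "v \<le> b" for v
  proof (cases "v = 0")
    case True
    then show ?thesis
      unfolding log_ratio_def K_def using \<open>0 \<le> K1\<close> \<open>0 \<le> K2\<close> by (simp add: death_0)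
  next
    case False
    then have "0 < v" using v by simp
    have pos: "0 < birth kb 0" "0 < birth kb v" "0 < death kd v" "0 < kd m * v ^ m"
      using birth_pos death_pos \<open>0 < v\<close> m by auto
    have ratio: "log_ratio v = ln (death kd v) - ln (birth kb v)"
      unfolding log_ratio_def using pos by (simp add: ln_div)
    have "ln (birth kb 0) \<le> ln (birth kb v)" "ln (death kd v) \<le> ln (death kd b)"
      using birth_mono[of 0 v] death_mono[OF v] v pos by auto
    moreover have "ln (death kd b) - ln (birth kb 0) \<le> K1" unfolding K1_def by simp
    ultimately have "log_ratio v \<le> K1" unfolding ratio by linarith
    have "ln (kd m * v ^ m) \<le> ln (death kd v)"
      using monomial_le_death[of v m] v m pos by simp
    then have "ln (kd m) + real m * ln v \<le> ln (death kd v)"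
      using m \<open>0 < v\<close> by (simp add: ln_mult ln_realpow)
    moreover have "ln (birth kb v) \<le> ln (birth kb b)"
      using birth_mono[OF v] pos by simp
    moreover have "ln (birth kb b) - ln (kd m) \<le> K2" unfolding K2_def by simp
    moreover have "- (real m * \<bar>ln v\<bar>) \<le> real m * ln v"
      using mult_left_mono[of "- \<bar>ln v\<bar>" "ln v" "real m"] by simp
    ultimately have "- log_ratio v \<le> K2 + real m * \<bar>ln v\<bar>" unfolding ratio by linarith
    moreover have "0 \<le> real m * \<bar>ln v\<bar>" by simp
    ultimately show ?thesis
      using \<open>log_ratio v \<le> K1\<close> \<open>0 \<le> K1\<close> \<open>0 \<le> K2\<close> unfolding K_def
      by (intro abs_leI) linarith+
  qed
  have "set_integrable lborel {0..b} (\<lambda>v. K + real m * \<bar>ln v\<bar>)"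
  proof (rule set_integral_add(1))
    show "set_integrable lborel {0..b} (\<lambda>v. K)"
      by (rule borel_integrable_atLeastAtMost') (rule continuous_on_const)
    show "set_integrable lborel {0..b} (\<lambda>v. real m * \<bar>ln v\<bar>)"
      by (intro set_integrable_mult_right set_integrable_abs set_integrable_ln)
  qed
  moreover have "log_ratio \<in> borel_measurable borel"
  proof -
    have "birth kb \<in> borel_measurable borel" "death kd \<in> borel_measurable borel"
      using isCont_birth isCont_death
      by (auto intro: borel_measurable_continuous_onI continuous_at_imp_continuous_on)
    then show ?thesis unfolding log_ratio_def by measurable
  qed
  then have "set_borel_measurable lborel {0..b} log_ratio"
    unfolding set_borel_measurable_def by measurable
  moreover have "AE v in lborel. v \<in> {0..b} \<longrightarrow> norm (log_ratio v) \<le> norm (K + real m * \<bar>ln v\<bar>)"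
  proof (rule AE_I2, rule impI)
    fix v assume "v \<in> {0..b}"
    moreover have "0 \<le> K + real m * \<bar>ln v\<bar>" using \<open>0 \<le> K1\<close> \<open>0 \<le> K2\<close> unfolding K_def by simp
    ultimately show "norm (log_ratio v) \<le> norm (K + real m * \<bar>ln v\<bar>)" using bound by simp
  qed
  ultimately show ?thesis by (rule set_integrable_bound)
qed

end

locale birth_death_equilibrium = birth_death +
  fixes sbar :: real
  assumes sbar_pos: "0 < sbar"
    and sbar_balance: "birth kb sbar = death kd sbar"
    and sbar_unique: "\<And>s. 0 < s \<Longrightarrow> birth kb s = death kd s \<Longrightarrow> s = sbar"
begin

lemma isCont_net_rate: "isCont net_rate s"
  by (intro continuous_intros isCont_birth isCont_death)

lemma net_rate_neg:
  assumes "sbar < s" shows "net_rate s < 0"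
proof (rule ccontr)
  assume "\<not> net_rate s < 0"
  obtain S where S: "\<And>s. S \<le> s \<Longrightarrow> birth kb s < death kd s"
    using eventually_birth_less_death by blast
  define T where "T = max S s"
  have "net_rate T \<le> 0" "s \<le> T" using S[of T] unfolding T_def by auto
  then obtain z where "s \<le> z" "net_rate z = 0"
    using IVT2[of net_rate T 0 s] isCont_net_rate \<open>\<not> net_rate s < 0\<close> by auto
  then show False using sbar_unique[of z] assms sbar_pos by auto
qed

lemma net_rate_pos:
  assumes "0 \<le> s" "s < sbar" shows "0 < net_rate s"
proof (rule ccontr)
  assume "\<not> 0 < net_rate s"
  moreover have "0 < net_rate 0" using birth_pos[of 0] death_0 by simp
  ultimately obtain z where "0 \<le> z" "z \<le> s" "net_rate z = 0"
    using IVT2[of net_rate s 0 0] isCont_net_rate assms(1) by auto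
  moreover have "z \<noteq> 0" using \<open>0 < net_rate 0\<close> \<open>net_rate z = 0\<close> by auto
  ultimately show False using sbar_unique[of z] assms by auto
qed

lemma net_rate_pos_left:
  obtains a where "a < 0" "\<And>y. a < y \<Longrightarrow> y < sbar \<Longrightarrow> 0 < net_rate y"
proof -
  have "0 < net_rate 0" using net_rate_pos[of 0] sbar_pos by simp
  with isCont_net_rate[of 0, unfolded isCont_def] have "\<forall>\<^sub>F y in at 0. 0 < net_rate y"
    by (rule order_tendstoD(1))
  then obtain d where "0 < d" "\<And>y. y \<noteq> 0 \<Longrightarrow> dist y 0 < d \<Longrightarrow> 0 < net_rate y"
    unfolding eventually_at by blast
  then have "0 < net_rate y" if "- d < y" "y < sbar" for y
    using that net_rate_pos[of y] \<open>0 < net_rate 0\<close> by (cases "y < 0") (auto simp: dist_real_def)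
  then show ?thesis using \<open>0 < d\<close> by (intro that[of "- d"]) auto
qed

sublocale crossing_integrand log_ratio sbar
proof
  fix v :: real
  show "0 < v \<Longrightarrow> v < sbar \<Longrightarrow> log_ratio v < 0"
    using net_rate_pos[of v] birth_pos[of v] death_pos[of v] unfolding log_ratio_def by simp
  show "sbar < v \<Longrightarrow> 0 < log_ratio v"
    using net_rate_neg[of v] birth_pos[of v] death_pos[of v] sbar_pos unfolding log_ratio_def by simp
qed (use sbar_pos set_integrable_log_ratio continuous_on_log_ratio in auto)

lemma solution_approaches_sbar:
  assumes sol: "is_solution net_rate x" and "0 \<le> x 0"
  shows "\<And>r t. 0 \<le> r \<Longrightarrow> r \<le> t \<Longrightarrow> x r \<le> x t \<and> x t \<le> sbar \<or> sbar \<le> x t \<and> x t \<le> x r"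
    and "(x \<longlongrightarrow> sbar) at_top"
proof -
  obtain a where "a < 0" and pos: "\<And>y. a < y \<Longrightarrow> y < sbar \<Longrightarrow> 0 < net_rate y"
    using net_rate_pos_left by blast
  define b where "b = max (x 0) sbar + 1"
  have "a < x 0" "a < sbar" "x 0 < b" "sbar < b"
    using \<open>a < 0\<close> assms(2) sbar_pos unfolding b_def by auto
  have nonneg: "0 \<le> net_rate y" if "a < y" "y < sbar" for y
    using pos[OF that] by simp
  have neg: "net_rate y < 0" if "sbar < y" "y < b" for y
    using net_rate_neg[OF that(1)] .
  have nonpos: "net_rate y \<le> 0" if "sbar < y" "y < b" for y
    using neg[OF that] by simp
  show "x r \<le> x t \<and> x t \<le> sbar \<or> sbar \<le> x t \<and> x t \<le> x r" if "0 \<le> r" "r \<le> t" for r t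
  proof (cases "x 0 \<le> sbar")
    case True
    note below = solution_mono_on_below[OF sol \<open>a < x 0\<close> True \<open>sbar < b\<close> nonneg nonpos]
    show ?thesis using monotone_onD[OF below(1), of r t] below(2)[of t] that by auto
  next
    case False
    then have "sbar \<le> x 0" by simp
    note above = solution_antimono_on_above[OF sol \<open>a < sbar\<close> \<open>sbar \<le> x 0\<close> \<open>x 0 < b\<close>
        nonneg nonpos]
    show ?thesis using monotone_onD[OF above(1), of r t] above(2)[of t] that by auto
  qed
  show "(x \<longlongrightarrow> sbar) at_top"
  proof (cases "x 0 \<le> sbar")
    case True
    show ?thesis
      by (rule solution_tendsto_from_below[OF sol \<open>a < x 0\<close> True \<open>sbar < b\<close>
            continuous_on_net_rate pos nonpos])
  next
    case False
    then have "sbar \<le> x 0" by simp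
    show ?thesis
      by (rule solution_tendsto_from_above[OF sol \<open>a < sbar\<close> \<open>sbar \<le> x 0\<close> \<open>x 0 < b\<close>
            continuous_on_net_rate nonneg neg])
  qed
qed

lemma sbar_stable:
  "\<forall>\<epsilon>>0. \<exists>\<delta>>0. \<forall>x. is_solution net_rate x \<and> 0 \<le> x 0 \<and> \<bar>x 0 - sbar\<bar> < \<delta>
              \<longrightarrow> (\<forall>t\<ge>0. \<bar>x t - sbar\<bar> < \<epsilon>)"
proof (intro allI impI)
  fix \<epsilon> :: real assume "0 < \<epsilon>"
  have "\<bar>x t - sbar\<bar> < \<epsilon>"
    if "is_solution net_rate x \<and> 0 \<le> x 0 \<and> \<bar>x 0 - sbar\<bar> < \<epsilon>" "0 \<le> t" for x t
    using solution_approaches_sbar(1)[of x 0 t] that by auto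
  then show "\<exists>\<delta>>0. \<forall>x. is_solution net_rate x \<and> 0 \<le> x 0 \<and> \<bar>x 0 - sbar\<bar> < \<delta>
              \<longrightarrow> (\<forall>t\<ge>0. \<bar>x t - sbar\<bar> < \<epsilon>)"
    using \<open>0 < \<epsilon>\<close> by blast
qed

lemma potential_antimono_along_solution:
  assumes sol: "is_solution net_rate x" and "0 \<le> x 0"
  shows "antimono_on {0..} (\<lambda>t. potential (x t))"
proof (rule monotone_onI)
  fix r t :: real assume "r \<in> {0..}" "t \<in> {0..}" "r \<le> t"
  moreover have "0 \<le> x r"
    using solution_approaches_sbar(1)[OF sol assms(2), of 0 r] \<open>r \<in> {0..}\<close> assms(2) sbar_pos by auto
  ultimately show "potential (x t) \<le> potential (x r)"
    using solution_approaches_sbar(1)[OF sol assms(2), of r t] potential_antimono potential_mono by auto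
qed

end

theorem lemma5p2:
  fixes kb kd :: "nat \<Rightarrow> real" and sbar :: real
  defines "f \<equiv> (\<lambda>s. birth kb s - death kd s)"
      and "V \<equiv> (\<lambda>s::real. LBINT v=ereal sbar..ereal s. ln (death kd v / birth kb v))"
  assumes kb_nonneg: "\<And>n. kb n \<ge> 0" and kd_nonneg: "\<And>n. kd n \<ge> 0"
      and kb_fin: "finite {n. kb n \<noteq> 0}" and kd_fin: "finite {n. kd n \<noteq> 0}"
      and k0: "kb 0 > 0"
      and death_ex: "\<exists>n\<ge>1. kd n > 0"
      and degree: "n_d kd > n_u kb \<or> (n_d kd = n_u kb \<and> kd (n_d kd) > kb (n_u kb))"
      and sbar_pos: "sbar > 0" and sbar_eq: "f sbar = 0"
      and sbar_unique: "\<And>s. s > 0 \<Longrightarrow> f s = 0 \<Longrightarrow> s = sbar"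
      and nondeg: "deriv f sbar \<noteq> 0"
  shows "(\<forall>s\<ge>0. V s \<ge> 0 \<and> (V s = 0 \<longleftrightarrow> s = sbar))
       \<and> (\<forall>x. is_solution f x \<and> x 0 \<ge> 0 \<longrightarrow> antimono_on {0..} (\<lambda>t. V (x t)))
       \<and> (\<forall>\<epsilon>>0. \<exists>\<delta>>0. \<forall>x. is_solution f x \<and> x 0 \<ge> 0 \<and> \<bar>x 0 - sbar\<bar> < \<delta>
              \<longrightarrow> (\<forall>t\<ge>0. \<bar>x t - sbar\<bar> < \<epsilon>))
       \<and> (\<forall>x. is_solution f x \<and> x 0 \<ge> 0 \<longrightarrow> (x \<longlongrightarrow> sbar) at_top)"
proof -
  interpret birth_death_equilibrium kb kd sbar
  proof unfold_locales
    show "birth kb sbar = death kd sbar" using sbar_eq unfolding f_def by simp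
    show "\<And>s. 0 < s \<Longrightarrow> birth kb s = death kd s \<Longrightarrow> s = sbar"
      using sbar_unique unfolding f_def by simp
  qed (fact kb_nonneg kd_nonneg kb_fin kd_fin k0 death_ex degree sbar_pos)+
  have V: "V = potential"
    unfolding V_def by (simp add: fun_eq_iff potential_def log_ratio_def)
  have f: "f = net_rate" by (simp add: f_def)
  show ?thesis
    unfolding V f
    using potential_nonneg potential_eq_0_iff potential_antimono_along_solution sbar_stable
      solution_approaches_sbar(2) by blast
qed

end
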